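(* For every natural number $k$, the set $\mathbb{R}^+$ of positive real numbers can be written as the union of $k$ pairwise disjoint nonempty subsets, each of which is closed under addition and multiplication. *)

theory Defs
  imports Complex_Main
begin

end

(*
  A derivation D of the reals maps sums and products of positive numbers to positive
  combinations of D-values: D (x + y) = D x + D y and D (x * y) = y * D x + x * D y.  So, given
  derivations D_0, ..., D_(m-1) and positive t_0, ..., t_(m-1) with D_i t_j = (if i = j then 1
  else 0), the positive reals split into m + 1 pieces closed under + and *, according to the
  first nonzero entry of (D_0 x, ..., D_(m-1) x): for each i < m the piece where it sits at
  position i and is positive, and the piece where the vector is lexicographically <= 0.  Piece i
  contains t_i and the last piece contains 1.

  Such derivations exist.  A derivation of a subring S extends to S[x], freely if x is
  transcendental over S and otherwise with D x forced by a minimal polynomial of x; by Zorn's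
  lemma it extends to the whole field.  Since R is uncountable, an element transcendental over the
  countable ring generated so far can always be adjoined.
*)
theory Submission
  imports Defs "HOL-Computational_Algebra.Polynomial" "HOL-Analysis.Continuum_Not_Denumerable"
begin

definition subring :: "'a::comm_ring_1 set \<Rightarrow> bool" where
  "subring S \<longleftrightarrow> 0 \<in> S \<and> 1 \<in> S \<and> (\<forall>x\<in>S. \<forall>y\<in>S. x + y \<in> S \<and> x * y \<in> S \<and> - x \<in> S)"

lemma subringD:
  assumes "subring S"
  shows subring_0: "0 \<in> S" and subring_1: "1 \<in> S"
    and subring_add: "x \<in> S \<Longrightarrow> y \<in> S \<Longrightarrow> x + y \<in> S"
    and subring_mult: "x \<in> S \<Longrightarrow> y \<in> S \<Longrightarrow> x * y \<in> S"
    and subring_uminus: "x \<in> S \<Longrightarrow> - x \<in> S"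
    and subring_diff: "x \<in> S \<Longrightarrow> y \<in> S \<Longrightarrow> x - y \<in> S"
  using assms unfolding subring_def by (simp_all, metis diff_conv_add_uminus)

lemma subring_sum: "subring S \<Longrightarrow> (\<And>i. i \<in> A \<Longrightarrow> f i \<in> S) \<Longrightarrow> sum f A \<in> S"
  by (induction A rule: infinite_finite_induct) (auto intro: subringD)

lemma subring_of_nat: "subring S \<Longrightarrow> of_nat n \<in> S"
  by (induction n) (auto intro: subringD)

definition polys_over :: "'a::zero set \<Rightarrow> 'a poly set" where
  "polys_over S = {p. \<forall>i. coeff p i \<in> S}"

context
  fixes S :: "'a::comm_ring_1 set"
  assumes S: "subring S"
begin

lemma polys_over_add: "p \<in> polys_over S \<Longrightarrow> q \<in> polys_over S \<Longrightarrow> p + q \<in> polys_over S"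
  and polys_over_uminus: "p \<in> polys_over S \<Longrightarrow> - p \<in> polys_over S"
  and polys_over_diff: "p \<in> polys_over S \<Longrightarrow> q \<in> polys_over S \<Longrightarrow> p - q \<in> polys_over S"
  and polys_over_mult: "p \<in> polys_over S \<Longrightarrow> q \<in> polys_over S \<Longrightarrow> p * q \<in> polys_over S"
  and polys_over_const: "c \<in> S \<Longrightarrow> [:c:] \<in> polys_over S"
  and polys_over_smult: "c \<in> S \<Longrightarrow> p \<in> polys_over S \<Longrightarrow> smult c p \<in> polys_over S"
  and polys_over_monom: "c \<in> S \<Longrightarrow> monom c n \<in> polys_over S"
  and polys_over_X: "[:0, 1:] \<in> polys_over S"
  using S unfolding polys_over_def
  by (auto simp: coeff_mult coeff_pCons split: nat.split intro!: subring_sum subringD)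

end

lemma polys_over_pderiv:
  fixes S :: "'a::idom set"
  shows "subring S \<Longrightarrow> p \<in> polys_over S \<Longrightarrow> pderiv p \<in> polys_over S"
  unfolding polys_over_def by (auto simp: coeff_pderiv intro!: subringD subring_of_nat)

definition derivation_on :: "'a::comm_ring_1 set \<Rightarrow> ('a \<Rightarrow> 'a) \<Rightarrow> bool" where
  "derivation_on S D \<longleftrightarrow> (\<forall>x\<in>S. \<forall>y\<in>S. D (x + y) = D x + D y \<and> D (x * y) = x * D y + y * D x)"

context
  fixes S :: "'a::comm_ring_1 set" and D :: "'a \<Rightarrow> 'a"
  assumes S: "subring S" and D: "derivation_on S D"
begin

lemma derivation_add: "x \<in> S \<Longrightarrow> y \<in> S \<Longrightarrow> D (x + y) = D x + D y"
  and derivation_mult: "x \<in> S \<Longrightarrow> y \<in> S \<Longrightarrow> D (x * y) = x * D y + y * D x"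
  using D unfolding derivation_on_def by auto

lemma derivation_0: "D 0 = 0"
  using derivation_add[of 0 0] subring_0[OF S] by simp

lemma derivation_1: "D 1 = 0"
  using derivation_mult[of 1 1] subring_1[OF S] by simp

lemma derivation_uminus: "x \<in> S \<Longrightarrow> D (- x) = - D x"
  using derivation_add[of x "- x"] derivation_0 subring_uminus[OF S] by (simp add: add_eq_0_iff2)

lemma derivation_sum: "(\<And>i. i \<in> A \<Longrightarrow> f i \<in> S) \<Longrightarrow> D (sum f A) = (\<Sum>i\<in>A. D (f i))"
  by (induction A rule: infinite_finite_induct)
    (simp_all add: derivation_0 derivation_add subring_sum[OF S])

lemma map_poly_derivation_add:
  "p \<in> polys_over S \<Longrightarrow> q \<in> polys_over S \<Longrightarrow> map_poly D (p + q) = map_poly D p + map_poly D q"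
  by (rule poly_eqI) (simp add: coeff_map_poly derivation_0 derivation_add polys_over_def)

lemma map_poly_derivation_mult:
  assumes "p \<in> polys_over S" "q \<in> polys_over S"
  shows "map_poly D (p * q) = map_poly D p * q + p * map_poly D q"
proof (rule poly_eqI)
  fix n
  have "coeff (map_poly D (p * q)) n = (\<Sum>i\<le>n. D (coeff p i * coeff q (n - i)))"
    using assms S by (simp add: coeff_map_poly derivation_0 coeff_mult derivation_sum
        subring_mult polys_over_def)
  also have "\<dots> = (\<Sum>i\<le>n. D (coeff p i) * coeff q (n - i) + coeff p i * D (coeff q (n - i)))"
    using assms by (intro sum.cong) (auto simp: polys_over_def derivation_mult)
  also have "\<dots> = coeff (map_poly D p * q + p * map_poly D q) n"
    by (simp add: coeff_mult coeff_map_poly derivation_0 sum.distrib)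
  finally show "coeff (map_poly D (p * q)) n = coeff (map_poly D p * q + p * map_poly D q) n" .
qed

end

lemma derivation_on_diff_scaled:
  "derivation_on S D\<^sub>1 \<Longrightarrow> derivation_on S D\<^sub>2 \<Longrightarrow> derivation_on S (\<lambda>y. D\<^sub>1 y - c * D\<^sub>2 y)"
  unfolding derivation_on_def by (simp add: algebra_simps)

section \<open>Extending a derivation by one element\<close>

text \<open>If \<open>D'\<close> extends the derivation \<open>D\<close> and \<open>D' x = b\<close>, then
  \<open>D' (poly q x) = lift_derivation D x b q\<close> by the chain rule.\<close>

definition lift_derivation :: "('a::idom \<Rightarrow> 'a) \<Rightarrow> 'a \<Rightarrow> 'a \<Rightarrow> 'a poly \<Rightarrow> 'a" where
  "lift_derivation D x b q = poly (map_poly D q) x + poly (pderiv q) x * b"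

context
  fixes S :: "'a::idom set" and D :: "'a \<Rightarrow> 'a"
  assumes S: "subring S" and D: "derivation_on S D"
begin

lemma lift_derivation_add:
  "p \<in> polys_over S \<Longrightarrow> q \<in> polys_over S \<Longrightarrow>
    lift_derivation D x b (p + q) = lift_derivation D x b p + lift_derivation D x b q"
  by (simp add: lift_derivation_def map_poly_derivation_add[OF S D] pderiv_add algebra_simps)

lemma lift_derivation_diff:
  "p \<in> polys_over S \<Longrightarrow> q \<in> polys_over S \<Longrightarrow>
    lift_derivation D x b (p - q) = lift_derivation D x b p - lift_derivation D x b q"
  using lift_derivation_add[of "p - q" q] polys_over_diff[OF S] by simp

lemma lift_derivation_mult:
  "p \<in> polys_over S \<Longrightarrow> q \<in> polys_over S \<Longrightarrow>
    lift_derivation D x b (p * q) = lift_derivation D x b p * poly q x + poly p x * lift_derivation D x b q"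
  by (simp add: lift_derivation_def map_poly_derivation_mult[OF S D] pderiv_mult algebra_simps)

lemma lift_derivation_const: "lift_derivation D x b [:c:] = D c"
  by (simp add: lift_derivation_def derivation_0[OF S D] map_poly_pCons)

lemma lift_derivation_smult:
  "c \<in> S \<Longrightarrow> q \<in> polys_over S \<Longrightarrow>
    lift_derivation D x b (smult c q) = D c * poly q x + c * lift_derivation D x b q"
  using lift_derivation_mult[of "[:c:]" q] lift_derivation_const polys_over_const[OF S] by simp

lemma lift_derivation_X: "lift_derivation D x b [:0, 1:] = b"
  by (simp add: lift_derivation_def derivation_0[OF S D] derivation_1[OF S D] map_poly_pCons pderiv_pCons)

end

definition compatible_value :: "'a::idom set \<Rightarrow> ('a \<Rightarrow> 'a) \<Rightarrow> 'a \<Rightarrow> 'a \<Rightarrow> bool" where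
  "compatible_value S D x b \<longleftrightarrow> (\<forall>q\<in>polys_over S. poly q x = 0 \<longrightarrow> lift_derivation D x b q = 0)"

lemma compatible_value_if_transcendental:
  "(\<And>q. q \<in> polys_over S \<Longrightarrow> q \<noteq> 0 \<Longrightarrow> poly q x \<noteq> 0) \<Longrightarrow> compatible_value S D x b"
  unfolding compatible_value_def by (metis lift_derivation_def map_poly_0 pderiv_0 poly_0 mult_zero_left add_0)

definition adjoin :: "'a::comm_ring_1 set \<Rightarrow> 'a \<Rightarrow> 'a set" where
  "adjoin S x = (\<lambda>q. poly q x) ` polys_over S"

lemma poly_mem_adjoin: "p \<in> polys_over S \<Longrightarrow> poly p x \<in> adjoin S x"
  by (simp add: adjoin_def)

lemma subring_adjoin:
  assumes S: "subring S"
  shows "subring (adjoin S x)"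
  unfolding subring_def
proof (intro conjI ballI)
  show "0 \<in> adjoin S x"
    using poly_mem_adjoin[of 0 S x] by (simp add: polys_over_def subring_0[OF S])
  show "1 \<in> adjoin S x"
    using poly_mem_adjoin[OF polys_over_const[OF S subring_1[OF S]], of x] by simp
  fix u v assume "u \<in> adjoin S x" "v \<in> adjoin S x"
  then obtain p q where pq: "p \<in> polys_over S" "q \<in> polys_over S" and "u = poly p x" "v = poly q x"
    by (auto simp: adjoin_def)
  then show "u + v \<in> adjoin S x" "u * v \<in> adjoin S x" "- u \<in> adjoin S x"
    using poly_mem_adjoin[of "p + q" S x] poly_mem_adjoin[of "p * q" S x] poly_mem_adjoin[of "- p" S x]
    by (simp_all add: polys_over_add polys_over_mult polys_over_uminus S)
qed

lemma subset_adjoin: "subring S \<Longrightarrow> S \<subseteq> adjoin S x"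
  using poly_mem_adjoin[of "[:_:]"] by (force intro: polys_over_const)

lemma mem_adjoin: "subring S \<Longrightarrow> x \<in> adjoin S x"
  using poly_mem_adjoin[of "[:0, 1:]"] polys_over_X by force

lemma derivation_extends_to_adjoin:
  fixes S :: "'a::idom set"
  assumes S: "subring S" and D: "derivation_on S D" and b: "compatible_value S D x b"
  obtains D' where "derivation_on (adjoin S x) D'" "\<And>s. s \<in> S \<Longrightarrow> D' s = D s" "D' x = b"
proof
  define D' where "D' y = lift_derivation D x b (SOME q. q \<in> polys_over S \<and> poly q x = y)" for y
  have D'_poly: "D' (poly q x) = lift_derivation D x b q" if q: "q \<in> polys_over S" for q
  proof -
    define r where "r = (SOME r. r \<in> polys_over S \<and> poly r x = poly q x)"
    have r: "r \<in> polys_over S" "poly r x = poly q x"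
      using someI[of "\<lambda>r. r \<in> polys_over S \<and> poly r x = poly q x" q] q by (simp_all add: r_def)
    then have "lift_derivation D x b (r - q) = 0"
      using b q polys_over_diff[OF S] by (simp add: compatible_value_def)
    then show ?thesis
      using r q by (simp add: D'_def r_def lift_derivation_diff[OF S D])
  qed
  show "derivation_on (adjoin S x) D'"
    unfolding derivation_on_def adjoin_def
  proof (clarsimp)
    fix p q assume pq: "p \<in> polys_over S" "q \<in> polys_over S"
    have "D' (poly p x + poly q x) = lift_derivation D x b (p + q)"
      using D'_poly[of "p + q"] polys_over_add[OF S pq] by simp
    moreover have "D' (poly p x * poly q x) = lift_derivation D x b (p * q)"
      using D'_poly[of "p * q"] polys_over_mult[OF S pq] by simp
    ultimately show "D' (poly p x + poly q x) = D' (poly p x) + D' (poly q x) \<and>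
        D' (poly p x * poly q x) = poly p x * D' (poly q x) + poly q x * D' (poly p x)"
      using pq by (simp add: D'_poly lift_derivation_add[OF S D] lift_derivation_mult[OF S D])
  qed
  show "D' s = D s" if "s \<in> S" for s
    using D'_poly[of "[:s:]"] polys_over_const[OF S that] lift_derivation_const[OF S D] by simp
  show "D' x = b"
    using D'_poly[of "[:0, 1:]"] polys_over_X[OF S] lift_derivation_X[OF S D] by simp
qed

text \<open>A root \<open>p\<close> of minimal degree annihilated by \<open>lift_derivation\<close> forces every other
  root \<open>q\<close> to be annihilated: cancelling the leading term of \<open>q\<close> by a multiple of \<open>p\<close>
  lowers the degree.\<close>

lemma compatible_value_if_minimal_root:
  fixes S :: "'a::idom set"
  assumes S: "subring S" and D: "derivation_on S D"
    and p: "p \<in> polys_over S" "p \<noteq> 0" "poly p x = 0" "lift_derivation D x b p = 0"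
    and p_min: "\<And>q. q \<in> polys_over S \<Longrightarrow> q \<noteq> 0 \<Longrightarrow> poly q x = 0 \<Longrightarrow> degree p \<le> degree q"
  shows "compatible_value S D x b"
  unfolding compatible_value_def
proof (intro ballI impI)
  fix q assume "q \<in> polys_over S" "poly q x = 0"
  then show "lift_derivation D x b q = 0"
  proof (induction "degree q" arbitrary: q rule: less_induct)
    case less
    show ?case
    proof (cases "q = 0")
      case True
      then show ?thesis by (simp add: lift_derivation_def)
    next
      case False
      define n d where "n = degree q" and "d = degree p"
      have "d \<le> n" using p_min less.prems False by (simp add: n_def d_def)
      define c a where "c = lead_coeff p" and "a = lead_coeff q"
      have ca: "c \<in> S" "a \<in> S" using p(1) less.prems(1) by (simp_all add: c_def a_def polys_over_def)
      define r where "r = smult c q - monom a (n - d) * p"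
      have pqr: "monom a (n - d) * p \<in> polys_over S" "r \<in> polys_over S"
        unfolding r_def
        by (intro polys_over_diff polys_over_smult polys_over_mult polys_over_monom S ca p(1)
            less.prems(1))+
      have "lift_derivation D x b r = 0"
      proof (cases "r = 0")
        case False
        have "degree (monom a (n - d) * p) \<le> n"
          using degree_mult_le[of "monom a (n - d)" p] degree_monom_le[of a "n - d"] \<open>d \<le> n\<close>
          by (simp add: d_def)
        then have "degree r \<le> n"
          by (simp add: r_def n_def degree_diff_le degree_mult_le)
        moreover have "coeff r n = 0"
          using \<open>d \<le> n\<close> by (simp add: r_def coeff_monom_mult c_def a_def n_def d_def)
        ultimately have "degree r < degree q"
          using False degree_less_if_less_eqI by (simp add: n_def)
        then show ?thesis using less.hyps pqr(2) less.prems(2) p(3) by (simp add: r_def)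
      qed (simp add: lift_derivation_def)
      moreover have "lift_derivation D x b r = c * lift_derivation D x b q"
        using less.prems p(3,4) ca pqr(1)
        by (simp add: r_def lift_derivation_diff[OF S D] lift_derivation_smult[OF S D]
            lift_derivation_mult[OF S D] polys_over_smult[OF S] polys_over_monom[OF S] p(1))
      moreover have "c \<noteq> 0" using p(2) by (simp add: c_def)
      ultimately show ?thesis by simp
    qed
  qed
qed

lemma compatible_value_exists:
  fixes S :: "'a::field_char_0 set"
  assumes S: "subring S" and D: "derivation_on S D"
  obtains b where "compatible_value S D x b"
proof (cases "\<exists>q\<in>polys_over S. q \<noteq> 0 \<and> poly q x = 0")
  case False
  then have "compatible_value S D x 0"
    by (blast intro: compatible_value_if_transcendental)
  then show ?thesis by (rule that)
next
  case True
  then obtain p where p: "p \<in> polys_over S" "p \<noteq> 0" "poly p x = 0"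
    and p_min: "\<And>q. q \<in> polys_over S \<Longrightarrow> q \<noteq> 0 \<Longrightarrow> poly q x = 0 \<Longrightarrow> degree p \<le> degree q"
    using ex_has_least_nat[of "\<lambda>q. q \<in> polys_over S \<and> q \<noteq> 0 \<and> poly q x = 0" _ degree] by blast
  have "degree p \<noteq> 0"
  proof
    assume "degree p = 0"
    then obtain c where "p = [:c:]" by (rule degree_eq_zeroE)
    with p show False by simp
  qed
  then have "pderiv p \<noteq> 0" "degree (pderiv p) < degree p"
    by (simp_all add: pderiv_eq_0_iff degree_pderiv)
  then have p'x: "poly (pderiv p) x \<noteq> 0"
    using p_min polys_over_pderiv[OF S p(1)] by force
  define b where "b = - poly (map_poly D p) x / poly (pderiv p) x"
  have "lift_derivation D x b p = 0"
    using p'x by (simp add: lift_derivation_def b_def)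
  then show ?thesis
    using compatible_value_if_minimal_root[OF S D p] p_min that by blast
qed

section \<open>Extending a derivation to the whole field\<close>

text \<open>Partial derivations are compared through their graphs, so that Zorn's lemma for \<open>\<subseteq>\<close> applies;
  all closure conditions involve two points only, hence survive unions of chains.\<close>

definition derivation_graph :: "('a::comm_ring_1 \<times> 'a) set \<Rightarrow> bool" where
  "derivation_graph G \<longleftrightarrow> single_valued G \<and> (1, 0) \<in> G \<and>
     (\<forall>x dx y dy. (x, dx) \<in> G \<longrightarrow> (y, dy) \<in> G \<longrightarrow>
        (x + y, dx + dy) \<in> G \<and> (x * y, x * dy + y * dx) \<in> G \<and> (- x, - dx) \<in> G)"

lemma derivation_graphD:
  assumes "derivation_graph G" "(x, dx) \<in> G" "(y, dy) \<in> G"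
  shows "(x + y, dx + dy) \<in> G" "(x * y, x * dy + y * dx) \<in> G" "(- x, - dx) \<in> G"
  using assms by (simp_all add: derivation_graph_def)

lemma derivation_graph_image:
  assumes S: "subring S" and D: "derivation_on S D"
  shows "derivation_graph ((\<lambda>s. (s, D s)) ` S)"
  unfolding derivation_graph_def single_valued_def
  using subring_1[OF S] derivation_1[OF S D]
  by (force intro: subringD[OF S] simp: derivation_add[OF S D] derivation_mult[OF S D]
      derivation_uminus[OF S D])

lemma derivation_graphE:
  assumes "derivation_graph G"
  obtains S D where "G = (\<lambda>s. (s, D s)) ` S" "subring S" "derivation_on S D"
proof
  define D where "D x = (THE y. (x, y) \<in> G)" for x
  have "single_valued G"
    using assms by (simp add: derivation_graph_def)
  then have D_eq: "D x = y" if "(x, y) \<in> G" for x y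
    unfolding D_def using that by (intro the_equality) (auto simp: single_valued_def)
  have graph: "(x, D x) \<in> G" if "x \<in> Domain G" for x
    using that D_eq by blast
  show "G = (\<lambda>s. (s, D s)) ` Domain G"
    using D_eq graph by force
  have one: "(1, 0) \<in> G"
    using assms by (simp add: derivation_graph_def)
  then have zero: "(0, 0) \<in> G"
    using derivation_graphD(1)[OF assms one derivation_graphD(3)[OF assms one one]] by simp
  note closed = derivation_graphD[OF assms graph graph]
  show "subring (Domain G)"
    unfolding subring_def
  proof (intro conjI ballI)
    show "0 \<in> Domain G" "1 \<in> Domain G"
      using zero one by blast+
    fix x y assume "x \<in> Domain G" "y \<in> Domain G"
    from closed[OF this] show "x + y \<in> Domain G" "x * y \<in> Domain G" "- x \<in> Domain G"
      by blast+
  qed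
  show "derivation_on (Domain G) D"
    unfolding derivation_on_def
  proof (intro conjI ballI)
    fix x y assume "x \<in> Domain G" "y \<in> Domain G"
    from closed[OF this] show "D (x + y) = D x + D y" "D (x * y) = x * D y + y * D x"
      by (simp_all add: D_eq)
  qed
qed

lemma derivation_graph_Union_chain:
  assumes "C \<noteq> {}" and graphs: "\<And>G. G \<in> C \<Longrightarrow> derivation_graph G"
    and chain: "\<And>G H. G \<in> C \<Longrightarrow> H \<in> C \<Longrightarrow> G \<subseteq> H \<or> H \<subseteq> G"
  shows "derivation_graph (\<Union>C)"
proof -
  have common: "\<exists>G\<in>C. u \<in> G \<and> v \<in> G" if "u \<in> \<Union>C" "v \<in> \<Union>C" for u v
    using that chain by blast
  have "(1, 0) \<in> \<Union>C"
    using assms(1) graphs by (auto simp: derivation_graph_def)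
  moreover have "single_valued (\<Union>C)"
  proof (rule single_valuedI)
    fix x y z assume "(x, y) \<in> \<Union>C" "(x, z) \<in> \<Union>C"
    with common obtain G where "G \<in> C" "(x, y) \<in> G" "(x, z) \<in> G" by blast
    with graphs show "y = z" by (auto simp: derivation_graph_def single_valued_def)
  qed
  moreover have "\<forall>x dx y dy. (x, dx) \<in> \<Union>C \<longrightarrow> (y, dy) \<in> \<Union>C \<longrightarrow>
      (x + y, dx + dy) \<in> \<Union>C \<and> (x * y, x * dy + y * dx) \<in> \<Union>C \<and> (- x, - dx) \<in> \<Union>C"
  proof (intro allI impI)
    fix x dx y dy assume "(x, dx) \<in> \<Union>C" "(y, dy) \<in> \<Union>C"
    from common[OF this] obtain G where "G \<in> C" "(x, dx) \<in> G" "(y, dy) \<in> G" by blast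
    with graphs show
      "(x + y, dx + dy) \<in> \<Union>C \<and> (x * y, x * dy + y * dx) \<in> \<Union>C \<and> (- x, - dx) \<in> \<Union>C"
      by (blast dest: derivation_graphD)
  qed
  ultimately show ?thesis
    unfolding derivation_graph_def by blast
qed

lemma derivation_extends_to_UNIV:
  fixes D\<^sub>0 :: "'a::field_char_0 \<Rightarrow> 'a"
  assumes "subring S\<^sub>0" "derivation_on S\<^sub>0 D\<^sub>0"
  obtains D where "derivation_on UNIV D" "\<And>s. s \<in> S\<^sub>0 \<Longrightarrow> D s = D\<^sub>0 s"
proof -
  define \<G> where "\<G> = {G. derivation_graph G \<and> (\<lambda>s. (s, D\<^sub>0 s)) ` S\<^sub>0 \<subseteq> G}"
  have "\<exists>M\<in>\<G>. \<forall>G\<in>\<G>. M \<subseteq> G \<longrightarrow> G = M"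
  proof (rule subset_Zorn_nonempty)
    show "\<G> \<noteq> {}"
      using derivation_graph_image[OF assms] by (auto simp: \<G>_def)
    show "\<Union>C \<in> \<G>" if "C \<noteq> {}" "subset.chain \<G> C" for C
      using that derivation_graph_Union_chain[of C] unfolding \<G>_def subset_chain_def by blast
  qed
  then obtain M where M: "M \<in> \<G>" and M_max: "\<And>G. G \<in> \<G> \<Longrightarrow> M \<subseteq> G \<Longrightarrow> G = M"
    by blast
  then obtain S D where M_eq: "M = (\<lambda>s. (s, D s)) ` S" and S: "subring S" and D: "derivation_on S D"
    by (auto simp: \<G>_def elim: derivation_graphE)
  have "x \<in> S" for x
  proof -
    obtain b where "compatible_value S D x b"
      using compatible_value_exists[OF S D] .
    then obtain D' where D': "derivation_on (adjoin S x) D'" "\<And>s. s \<in> S \<Longrightarrow> D' s = D s"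
      using derivation_extends_to_adjoin[OF S D] by metis
    define G where "G = (\<lambda>s. (s, D' s)) ` adjoin S x"
    have "M \<subseteq> G"
      using subset_adjoin[OF S] D'(2) by (force simp: M_eq G_def)
    moreover have "G \<in> \<G>"
      using derivation_graph_image[OF subring_adjoin[OF S] D'(1)] M \<open>M \<subseteq> G\<close>
      by (auto simp: \<G>_def G_def)
    ultimately have "G = M" by (rule M_max[rotated])
    then show "x \<in> S"
      using mem_adjoin[OF S, of x] by (auto simp: G_def M_eq)
  qed
  then have "S = UNIV" by auto
  with D have "derivation_on UNIV D" by simp
  moreover have "D s = D\<^sub>0 s" if "s \<in> S\<^sub>0" for s
    using M that by (auto simp: \<G>_def M_eq)
  ultimately show ?thesis by (rule that)
qed

section \<open>Dual families of derivations of the reals\<close>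

lemma countable_polys_over:
  assumes "countable S"
  shows "countable (polys_over S)"
proof (rule countable_subset)
  show "polys_over S \<subseteq> Poly ` lists S"
  proof
    fix p assume "p \<in> polys_over S"
    have "set (coeffs p) \<subseteq> range (coeff p)"
      by (simp add: range_coeff subset_insertI)
    also have "\<dots> \<subseteq> S"
      using \<open>p \<in> polys_over S\<close> by (auto simp: polys_over_def)
    finally show "p \<in> Poly ` lists S"
      by (intro image_eqI[of _ _ "coeffs p"]) auto
  qed
  show "countable (Poly ` lists S)"
    using assms by simp
qed

lemma countable_adjoin: "countable S \<Longrightarrow> countable (adjoin S x)"
  unfolding adjoin_def by (intro countable_image countable_polys_over)

lemma exists_transcendental:
  fixes S :: "real set"
  assumes "countable S"
  obtains x where "x > 0" "\<And>q. q \<in> polys_over S \<Longrightarrow> q \<noteq> 0 \<Longrightarrow> poly q x \<noteq> 0"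
proof -
  define R where "R = (\<Union>q\<in>polys_over S - {0}. {x. poly q x = 0})"
  have "countable (polys_over S - {0})"
    using countable_polys_over[OF assms] by simp
  then have "countable R"
    unfolding R_def by (rule countable_UN) (simp add: countable_finite poly_roots_finite)
  moreover have "uncountable {0<..<(1::real)}"
    by (simp add: uncountable_open_interval)
  ultimately obtain x where "x \<in> {0<..<1}" "x \<notin> R"
    using countable_subset[of "{0<..<1}" R] by blast
  then show ?thesis
    using that by (auto simp: R_def)
qed

lemma exists_derivation_vanishing_on:
  fixes S :: "real set"
  assumes S: "subring S" "countable S"
  obtains x E where "x > 0" "derivation_on UNIV E" "\<And>s. s \<in> S \<Longrightarrow> E s = 0" "E x = 1"
proof -
  obtain x where x: "x > 0" "\<And>q. q \<in> polys_over S \<Longrightarrow> q \<noteq> 0 \<Longrightarrow> poly q x \<noteq> 0"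
    using exists_transcendental[OF S(2)] by blast
  have zero: "derivation_on S (\<lambda>_. 0)"
    by (simp add: derivation_on_def)
  have "compatible_value S (\<lambda>_. 0) x 1"
    using x(2) by (rule compatible_value_if_transcendental)
  then obtain E\<^sub>0 where
    E\<^sub>0: "derivation_on (adjoin S x) E\<^sub>0" "\<And>s. s \<in> S \<Longrightarrow> E\<^sub>0 s = 0" "E\<^sub>0 x = 1"
    using derivation_extends_to_adjoin[OF S(1) zero] by auto
  obtain E where E: "derivation_on UNIV E" "\<And>s. s \<in> adjoin S x \<Longrightarrow> E s = E\<^sub>0 s"
    using derivation_extends_to_UNIV[OF subring_adjoin[OF S(1)] E\<^sub>0(1)] by auto
  have E_S: "E s = 0" if "s \<in> S" for s
    using E(2)[OF subsetD[OF subset_adjoin[OF S(1)] that]] E\<^sub>0(2)[OF that] by simp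
  have E_x: "E x = 1"
    using E(2) E\<^sub>0(3) mem_adjoin[OF S(1), of x] by simp
  show ?thesis
    by (rule that[OF x(1) E(1) E_S E_x])
qed

text \<open>The induction step takes \<open>E\<close> vanishing on the ring generated so far, with \<open>E x = 1\<close>,
  and makes the old derivations vanish at \<open>x\<close> by subtracting multiples of \<open>E\<close>.\<close>

lemma dual_derivations:
  fixes m :: nat
  obtains D :: "nat \<Rightarrow> real \<Rightarrow> real" and t :: "nat \<Rightarrow> real"
  where "\<And>i. derivation_on UNIV (D i)" "\<And>j. j < m \<Longrightarrow> t j > 0"
    "\<And>i j. i < m \<Longrightarrow> j < m \<Longrightarrow> D i (t j) = (if i = j then 1 else 0)"
proof -
  have "\<exists>S (D :: nat \<Rightarrow> real \<Rightarrow> real) t.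
      subring S \<and> countable S \<and> (\<forall>j<m. t j \<in> S \<and> t j > 0) \<and>
      (\<forall>i. derivation_on UNIV (D i)) \<and> (\<forall>i<m. \<forall>j<m. D i (t j) = (if i = j then 1 else 0))"
  proof (induction m)
    case 0
    have "subring (\<int> :: real set)"
      by (simp add: subring_def)
    moreover have "derivation_on UNIV (\<lambda>_ :: real. 0)"
      by (simp add: derivation_on_def)
    ultimately show ?case
      using countable_int by (intro exI[of _ "\<int>"] exI[of _ "\<lambda>_. \<lambda>_. 0"]) auto
  next
    case (Suc m)
    then obtain S :: "real set" and D t
      where S: "subring S" "countable S" and t: "\<forall>j<m. t j \<in> S \<and> t j > 0"
      and D: "\<forall>i. derivation_on UNIV (D i)" "\<forall>i<m. \<forall>j<m. D i (t j) = (if i = j then 1 else 0)"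
      by blast
    obtain x E where x: "x > 0" and E: "derivation_on UNIV E" "\<And>s. s \<in> S \<Longrightarrow> E s = 0" "E x = 1"
      using exists_derivation_vanishing_on[OF S] by auto
    define D' where "D' = (\<lambda>i y. D i y - D i x * E y)(m := E)"
    have "\<forall>j<Suc m. (t(m := x)) j \<in> adjoin S x \<and> (t(m := x)) j > 0"
      using t x(1) subset_adjoin[OF S(1), of x] mem_adjoin[OF S(1), of x] by (auto simp: less_Suc_eq)
    moreover have "\<forall>i. derivation_on UNIV (D' i)"
      using D(1) E(1) by (simp add: D'_def derivation_on_diff_scaled)
    moreover have "\<forall>i<Suc m. \<forall>j<Suc m. D' i ((t(m := x)) j) = (if i = j then 1 else 0)"
      using D(2) t E(2,3) by (auto simp: D'_def less_Suc_eq)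
    ultimately show ?case
      using subring_adjoin[OF S(1)] countable_adjoin[OF S(2)]
      by (intro exI[of _ "adjoin S x"] exI[of _ D'] exI[of _ "t(m := x)"]) simp
  qed
  then obtain D :: "nat \<Rightarrow> real \<Rightarrow> real" and t :: "nat \<Rightarrow> real" where
    "\<forall>i. derivation_on UNIV (D i)" "\<forall>j<m. t j > 0"
    "\<forall>i<m. \<forall>j<m. D i (t j) = (if i = j then 1 else 0)"
    by blast
  then show ?thesis
    using that by blast
qed

section \<open>Lexicographic cones\<close>

definition lex_pos_at :: "nat \<Rightarrow> (nat \<Rightarrow> real) \<Rightarrow> bool" where
  "lex_pos_at i u \<longleftrightarrow> (\<forall>l<i. u l = 0) \<and> u i > 0"

definition lex_nonpos :: "nat \<Rightarrow> (nat \<Rightarrow> real) \<Rightarrow> bool" where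
  "lex_nonpos m u \<longleftrightarrow> (\<forall>i<m. \<not> lex_pos_at i u)"

lemma lex_pos_at_unique: "lex_pos_at i u \<Longrightarrow> lex_pos_at j u \<Longrightarrow> i = j"
  unfolding lex_pos_at_def by (metis less_irrefl linorder_neqE_nat)

lemma lex_pos_at_pos_comb:
  "lex_pos_at i u \<Longrightarrow> lex_pos_at i v \<Longrightarrow> a > 0 \<Longrightarrow> b > 0 \<Longrightarrow>
    lex_pos_at i (\<lambda>l. a * u l + b * v l)"
  unfolding lex_pos_at_def by (simp add: add_pos_pos)

lemma lex_nonpos_pos_comb:
  assumes u: "lex_nonpos m u" and v: "lex_nonpos m v" and "a > 0" "b > 0"
  shows "lex_nonpos m (\<lambda>l. a * u l + b * v l)"
  unfolding lex_nonpos_def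
proof (intro allI impI notI)
  fix i assume "i < m" and pos: "lex_pos_at i (\<lambda>l. a * u l + b * v l)"
  have nonpos: "u l \<le> 0 \<and> v l \<le> 0" if "l < m" "\<forall>l'<l. u l' = 0 \<and> v l' = 0" for l
    using u v that unfolding lex_nonpos_def lex_pos_at_def by (meson not_less)
  have "\<forall>l'<l. u l' = 0 \<and> v l' = 0" if "l \<le> i" for l
    using that
  proof (induction l)
    case (Suc l)
    then have "u l \<le> 0" "v l \<le> 0" "a * u l + b * v l = 0"
      using nonpos[of l] pos \<open>i < m\<close> by (auto simp: lex_pos_at_def)
    moreover from \<open>u l \<le> 0\<close> \<open>v l \<le> 0\<close> have "a * u l \<le> 0" "b * v l \<le> 0"
      using \<open>a > 0\<close> \<open>b > 0\<close> by (simp_all add: mult_nonneg_nonpos)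
    ultimately have "a * u l = 0" "b * v l = 0"
      by linarith+
    then have "u l = 0 \<and> v l = 0"
      using \<open>a > 0\<close> \<open>b > 0\<close> by simp
    with Suc show ?case
      by (auto simp: less_Suc_eq)
  qed simp
  then have "u i \<le> 0" "v i \<le> 0"
    using nonpos \<open>i < m\<close> by blast+
  then have "a * u i + b * v i \<le> 0"
    using \<open>a > 0\<close> \<open>b > 0\<close> by (simp add: add_nonpos_nonpos mult_nonneg_nonpos)
  with pos show False
    by (simp add: lex_pos_at_def)
qed

lemma derivation_cone_closed:
  fixes D :: "nat \<Rightarrow> real \<Rightarrow> real"
  assumes D: "\<And>l. derivation_on UNIV (D l)"
    and C: "\<And>u v a b. C u \<Longrightarrow> C v \<Longrightarrow> a > 0 \<Longrightarrow> b > 0 \<Longrightarrow> C (\<lambda>l. a * u l + b * v l)"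
    and xy: "x > 0" "y > 0" "C (\<lambda>l. D l x)" "C (\<lambda>l. D l y)"
  shows "C (\<lambda>l. D l (x + y)) \<and> C (\<lambda>l. D l (x * y))"
proof
  show "C (\<lambda>l. D l (x + y))"
    using C[OF xy(3,4), of 1 1] D by (simp add: derivation_on_def)
  show "C (\<lambda>l. D l (x * y))"
    using C[OF xy(3,4) xy(2,1)] D by (simp add: derivation_on_def add.commute)
qed

lemma positive_reals_partition:
  fixes D :: "nat \<Rightarrow> real \<Rightarrow> real" and t :: "nat \<Rightarrow> real"
  assumes D: "\<And>i. derivation_on UNIV (D i)" and t: "\<And>j. j < m \<Longrightarrow> t j > 0"
    and dual: "\<And>i j. i < m \<Longrightarrow> j < m \<Longrightarrow> D i (t j) = (if i = j then 1 else 0)"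
  shows "\<exists>A :: nat \<Rightarrow> real set.
           (\<Union>i<Suc m. A i) = {x. x > 0} \<and>
           (\<forall>i<Suc m. A i \<noteq> {}) \<and>
           (\<forall>i<Suc m. \<forall>j<Suc m. i \<noteq> j \<longrightarrow> A i \<inter> A j = {}) \<and>
           (\<forall>i<Suc m. \<forall>x\<in>A i. \<forall>y\<in>A i. x + y \<in> A i \<and> x * y \<in> A i)"
proof -
  define C where "C i = (if i < m then lex_pos_at i else lex_nonpos m)" for i
  define A where "A i = {x. x > 0 \<and> C i (\<lambda>l. D l x)}" for i
  have "(\<Union>i<Suc m. A i) = {x. x > 0}"
  proof (intro equalityI subsetI)
    fix x :: real assume "x \<in> {x. x > 0}"
    then have "x > 0" by simp
    show "x \<in> (\<Union>i<Suc m. A i)"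
    proof (cases "lex_nonpos m (\<lambda>l. D l x)")
      case True
      with \<open>x > 0\<close> have "x \<in> A m" by (simp add: A_def C_def)
      then show ?thesis by blast
    next
      case False
      then obtain i where "i < m" "lex_pos_at i (\<lambda>l. D l x)"
        by (auto simp: lex_nonpos_def)
      with \<open>x > 0\<close> have "x \<in> A i" by (simp add: A_def C_def)
      with \<open>i < m\<close> show ?thesis by auto
    qed
  qed (auto simp: A_def)
  moreover have "A i \<noteq> {}" if "i < Suc m" for i
  proof (cases "i < m")
    case True
    then have "t i \<in> A i"
      using t dual by (simp add: A_def C_def lex_pos_at_def)
    then show ?thesis by blast
  next
    case False
    have "D l 1 = 0" for l
      using derivation_1[OF _ D] by (simp add: subring_def)
    then have "1 \<in> A i"
      using False by (simp add: A_def C_def lex_nonpos_def lex_pos_at_def)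
    then show ?thesis by blast
  qed
  moreover have "A i \<inter> A j = {}" if "i < Suc m" "j < Suc m" "i \<noteq> j" for i j
    using that lex_pos_at_unique
    by (fastforce simp: A_def C_def lex_nonpos_def split: if_splits)
  moreover have "x + y \<in> A i \<and> x * y \<in> A i" if "x \<in> A i" "y \<in> A i" for i x y
  proof -
    have "C i (\<lambda>l. a * u l + b * v l)" if "C i u" "C i v" "a > 0" "b > 0" for u v a b
      using that lex_pos_at_pos_comb lex_nonpos_pos_comb by (simp add: C_def split: if_splits)
    with D \<open>x \<in> A i\<close> \<open>y \<in> A i\<close> show ?thesis
      using derivation_cone_closed[of D "C i" x y] by (simp add: A_def)
  qed
  ultimately show ?thesis
    by (intro exI[of _ A]) auto
qed

theorem theorem1p1:
  fixes k :: nat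
  assumes "k \<ge> 1"
  shows "\<exists>A :: nat \<Rightarrow> real set.
           (\<Union>i<k. A i) = {x. x > 0} \<and>
           (\<forall>i<k. A i \<noteq> {}) \<and>
           (\<forall>i<k. \<forall>j<k. i \<noteq> j \<longrightarrow> A i \<inter> A j = {}) \<and>
           (\<forall>i<k. \<forall>x\<in>A i. \<forall>y\<in>A i. x + y \<in> A i \<and> x * y \<in> A i)"
proof -
  obtain m where k: "k = Suc m"
    using assms by (cases k) auto
  show ?thesis
  proof (rule dual_derivations[of m])
    fix D :: "nat \<Rightarrow> real \<Rightarrow> real" and t :: "nat \<Rightarrow> real"
    assume "\<And>i. derivation_on UNIV (D i)" "\<And>j. j < m \<Longrightarrow> t j > 0"
      "\<And>i j. i < m \<Longrightarrow> j < m \<Longrightarrow> D i (t j) = (if i = j then 1 else 0)"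
    from positive_reals_partition[where m = m, OF this] show ?thesis
      by (simp add: k)
  qed
qed

end
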